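(* Let $d \in \mathbb{N}$, $s \in \{1,\dots,d\}$, $M \geq 1$, $y \in [0,1]^d$, and $p \in (0,\infty]$. Then \[ \operatorname{supp} \vartheta_{M,y}^{(s)} \subset y + (M^{-1} [-1,1]^s \times \mathbb{R}^{d - s}) \] and \[ \frac12 \cdot (4s)^{-s/p}\cdot M^{-s/p}\le \| \vartheta_{M,y}^{(s)} \|_{L^p([0,1]^d)} \le 2^{s/p} \cdot M^{-s/p} . \]
   Context: Let $\varrho(x)=\max\{0,x\}$. For $M>0$, $\sigma\in\mathbb{R}$ define $\Lambda_{M,\sigma}:\mathbb{R}\to(-\infty,1]$ by $\Lambda_{M,\sigma}(t)=0$ if $t\le \sigma-\frac1M$ and $\Lambda_{M,\sigma}(t)=1-M|t-\sigma|$ if $t\ge\sigma-\frac1M$. For $s\in\{1,\dots,d\}$ and $y\in\mathbb{R}^d$ define $\Delta^{(s)}_{M,y}(x)=\big(\sum_{i=1}^s\Lambda_{M,y_i}(x_i)\big)-(s-1)$ and $\vartheta^{(s)}_{M,y}(x)=\varrho(\Delta^{(s)}_{M,y}(x))$ for $x\in\mathbb{R}^d$. For $p=\infty$, $s/p=0$. *)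

theory Defs
  imports "HOL-Analysis.Analysis" "HOL-Probability.Essential_Supremum"
begin

text \<open>Points of R^d are functions nat => real; coordinate i of the paper is index i-1 here
  (indices 0..d-1). Only coordinates below d are ever used.\<close>

definition relu :: "real \<Rightarrow> real" where
  "relu x = max 0 x"

definition Lam :: "real \<Rightarrow> real \<Rightarrow> real \<Rightarrow> real" where
  "Lam M \<sigma> t = (if t \<le> \<sigma> - 1 / M then 0 else 1 - M * \<bar>t - \<sigma>\<bar>)"

definition Delta :: "nat \<Rightarrow> real \<Rightarrow> (nat \<Rightarrow> real) \<Rightarrow> (nat \<Rightarrow> real) \<Rightarrow> real" where
  "Delta s M y x = (\<Sum>i<s. Lam M (y i) (x i)) - (real s - 1)"

definition theta :: "nat \<Rightarrow> real \<Rightarrow> (nat \<Rightarrow> real) \<Rightarrow> (nat \<Rightarrow> real) \<Rightarrow> real" where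
  "theta s M y x = relu (Delta s M y x)"

definition unit_cube :: "nat \<Rightarrow> (nat \<Rightarrow> real) set" where
  "unit_cube d = {x. \<forall>i<d. x i \<in> {0..1}}"

definition cube_measure :: "nat \<Rightarrow> (nat \<Rightarrow> real) measure" where
  "cube_measure d = restrict_space (PiM {..<d} (\<lambda>_. lborel)) (unit_cube d)"

definition Lp_norm :: "'a measure \<Rightarrow> ereal \<Rightarrow> ('a \<Rightarrow> real) \<Rightarrow> ereal" where
  "Lp_norm M p f =
     (if p = \<infinity> then esssup M (\<lambda>x. ereal \<bar>f x\<bar>)
      else ereal ((enn2real (\<integral>\<^sup>+ x. ennreal (\<bar>f x\<bar> powr real_of_ereal p) \<partial>M))
                   powr (1 / real_of_ereal p)))"

definition s_over_p :: "nat \<Rightarrow> ereal \<Rightarrow> real" where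
  "s_over_p s p = (if p = \<infinity> then 0 else real s / real_of_ereal p)"

end

theory Submission
  imports Defs
begin

text \<open>
  The function theta takes values in [0,1] and vanishes unless |x i - y i| < 1/M for all i < s,
  so inside the cube its support lies in a box of volume (2/M)^s. Conversely theta \<ge> 1/2 as soon
  as |x i - y i| \<le> r = 1/(2sM) for all i < s; since r \<le> 1/2 and y lies in the cube, these points
  contain a box of side r inside the cube, of volume r^s. A function with values in [0,1] whose
  support has measure at most A and which is at least c on a set of measure at least B has
  L^p norm between c B^(1/p) and A^(1/p). This yields even the constant (2s)^(-s/p) in place of
  (4s)^(-s/p).
\<close>

lemma emeasure_PiM_lborel_box:
  fixes d :: nat and a b :: "nat \<Rightarrow> real"
  assumes "\<And>i. i < d \<Longrightarrow> a i \<le> b i"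
  shows "emeasure (PiM {..<d} (\<lambda>_. lborel)) (PiE {..<d} (\<lambda>i. {a i..b i}))
       = ennreal (\<Prod>i<d. b i - a i)"
proof -
  interpret product_sigma_finite "\<lambda>_. lborel :: real measure"
    by standard
  have "emeasure (PiM {..<d} (\<lambda>_. lborel)) (PiE {..<d} (\<lambda>i. {a i..b i}))
      = (\<Prod>i<d. emeasure lborel {a i..b i})"
    by (rule emeasure_PiM) auto
  also have "\<dots> = (\<Prod>i<d. ennreal (b i - a i))"
    using assms by (intro prod.cong) auto
  also have "\<dots> = ennreal (\<Prod>i<d. b i - a i)"
    by (rule prod_ennreal) (use assms in auto)
  finally show ?thesis .
qed

lemma prod_lessThan_if_less:
  assumes "s \<le> d"
  shows "(\<Prod>i<d. if i < s then c else 1) = c ^ s"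
proof -
  have "(\<Prod>i<d. if i < s then c else 1) = (\<Prod>i<s. if i < s then c else 1)"
    using assms by (intro prod.mono_neutral_right) auto
  then show ?thesis by simp
qed

lemma nn_integral_abs_powr_le_emeasure_support:
  fixes f :: "'a \<Rightarrow> real"
  assumes "0 < q" and f: "f \<in> borel_measurable M" and le_1: "\<And>x. x \<in> space M \<Longrightarrow> \<bar>f x\<bar> \<le> 1"
  shows "(\<integral>\<^sup>+x. ennreal (\<bar>f x\<bar> powr q) \<partial>M) \<le> emeasure M {x \<in> space M. f x \<noteq> 0}"
proof -
  have "(\<integral>\<^sup>+x. ennreal (\<bar>f x\<bar> powr q) \<partial>M) \<le> (\<integral>\<^sup>+x. indicator {x \<in> space M. f x \<noteq> 0} x \<partial>M)"
    by (rule nn_integral_mono) (use le_1 \<open>0 < q\<close> in \<open>auto simp: indicator_def powr_le1\<close>)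
  also have "\<dots> = emeasure M {x \<in> space M. f x \<noteq> 0}"
    using f by (intro nn_integral_indicator) measurable
  finally show ?thesis .
qed

lemma powr_mult_emeasure_le_nn_integral:
  fixes f :: "'a \<Rightarrow> real"
  assumes S: "S \<in> sets M" and ge_c: "\<And>x. x \<in> S \<Longrightarrow> c \<le> \<bar>f x\<bar>" and "0 \<le> c" and "0 \<le> q"
  shows "ennreal (c powr q) * emeasure M S \<le> (\<integral>\<^sup>+x. ennreal (\<bar>f x\<bar> powr q) \<partial>M)"
proof -
  have "ennreal (c powr q) * emeasure M S = (\<integral>\<^sup>+x. ennreal (c powr q) * indicator S x \<partial>M)"
    using S by (rule nn_integral_cmult_indicator[symmetric])
  also have "\<dots> \<le> (\<integral>\<^sup>+x. ennreal (\<bar>f x\<bar> powr q) \<partial>M)"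
    by (rule nn_integral_mono)
      (use ge_c \<open>0 \<le> c\<close> \<open>0 \<le> q\<close> in \<open>auto simp: indicator_def intro!: ennreal_leI powr_mono2\<close>)
  finally show ?thesis .
qed

lemma le_esssup_of_emeasure_ne_0:
  assumes S: "S \<in> sets M" and ge_c: "\<And>x. x \<in> S \<Longrightarrow> c \<le> f x" and "emeasure M S \<noteq> 0"
  shows "c \<le> esssup M f"
proof (rule ccontr)
  assume "\<not> c \<le> esssup M f"
  then have "AE x in M. f x < c"
    using esssup_AE[of f M] by (auto elim!: eventually_mono)
  then have "AE x in M. x \<notin> S"
    by (auto elim!: eventually_mono dest!: ge_c leD)
  then have "emeasure M S = 0"
    by (simp add: AE_iff_null_sets[OF S, symmetric] null_setsD1)
  with \<open>emeasure M S \<noteq> 0\<close> show False ..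
qed

text \<open>The exponent s_over_p 1 p is 1/p, read as 0 for p = \<infinity>.\<close>
lemma Lp_norm_bounds:
  fixes f :: "'a \<Rightarrow> real" and p :: ereal
  assumes "0 < p" and f: "f \<in> borel_measurable M" and le_1: "\<And>x. x \<in> space M \<Longrightarrow> \<bar>f x\<bar> \<le> 1"
    and support: "emeasure M {x \<in> space M. f x \<noteq> 0} \<le> ennreal A"
    and S: "S \<in> sets M" and ge_c: "\<And>x. x \<in> S \<Longrightarrow> c \<le> \<bar>f x\<bar>" and B: "ennreal B \<le> emeasure M S"
    and "0 < c" and "0 < B"
  shows "c * B powr s_over_p 1 p \<le> Lp_norm M p f \<and> Lp_norm M p f \<le> A powr s_over_p 1 p"
proof -
  have "S \<subseteq> {x \<in> space M. f x \<noteq> 0}"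
    using sets.sets_into_space[OF S] ge_c \<open>0 < c\<close> by force
  then have "emeasure M S \<le> emeasure M {x \<in> space M. f x \<noteq> 0}"
    using f by (intro emeasure_mono) measurable
  with B support have "ennreal B \<le> ennreal A"
    by order
  with \<open>0 < B\<close> have "0 < A"
    by (cases "0 \<le> A") (auto simp: ennreal_neg)
  show ?thesis
  proof (cases "p = \<infinity>")
    case True
    have "emeasure M S \<noteq> 0"
      using B \<open>0 < B\<close> by (auto simp: order.antisym)
    then have "ereal c \<le> esssup M (\<lambda>x. ereal \<bar>f x\<bar>)"
      using S ge_c by (intro le_esssup_of_emeasure_ne_0) auto
    moreover have "esssup M (\<lambda>x. ereal \<bar>f x\<bar>) \<le> 1"
      using f le_1 by (intro esssup_I AE_I2) auto
    ultimately show ?thesis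
      using True \<open>0 < A\<close> \<open>0 < B\<close> by (simp add: Lp_norm_def s_over_p_def one_ereal_def)
  next
    case False
    then obtain q where p: "p = ereal q" and "0 < q"
      using \<open>0 < p\<close> by (cases p) auto
    let ?I = "\<integral>\<^sup>+x. ennreal (\<bar>f x\<bar> powr q) \<partial>M"
    have "?I \<le> emeasure M {x \<in> space M. f x \<noteq> 0}"
      using \<open>0 < q\<close> f le_1 by (rule nn_integral_abs_powr_le_emeasure_support)
    with support have upper: "?I \<le> ennreal A"
      by order
    have "ennreal (c powr q * B) = ennreal (c powr q) * ennreal B"
      using \<open>0 < B\<close> by (simp add: ennreal_mult)
    also have "\<dots> \<le> ennreal (c powr q) * emeasure M S"
      using B by (rule mult_left_mono) simp
    also have "\<dots> \<le> ?I"
      using S ge_c \<open>0 < c\<close> \<open>0 < q\<close> by (intro powr_mult_emeasure_le_nn_integral) auto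
    finally have lower: "ennreal (c powr q * B) \<le> ?I" .
    have "?I < top"
      using upper ennreal_less_top by (rule le_less_trans)
    then have "c powr q * B \<le> enn2real ?I" and "enn2real ?I \<le> A"
      using enn2real_mono[OF lower] enn2real_mono[OF upper] \<open>0 < A\<close> \<open>0 < B\<close> by auto
    then have "(c powr q * B) powr (1 / q) \<le> enn2real ?I powr (1 / q)"
      and "enn2real ?I powr (1 / q) \<le> A powr (1 / q)"
      using \<open>0 < q\<close> \<open>0 < c\<close> \<open>0 < B\<close> by (auto intro!: powr_mono2)
    moreover have "(c powr q * B) powr (1 / q) = c * B powr (1 / q)"
      using \<open>0 < q\<close> \<open>0 < c\<close> by (simp add: powr_mult powr_powr)
    ultimately show ?thesis
      using p by (simp add: Lp_norm_def s_over_p_def)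
  qed
qed

lemma power_powr_s_over_p: "0 < x \<Longrightarrow> (x ^ s) powr s_over_p 1 p = x powr s_over_p s p"
  by (simp add: s_over_p_def powr_realpow[symmetric] powr_powr)

lemma closed_coordinate_box:
  "closed {x :: nat \<Rightarrow> real. \<forall>i<s. x i - y i \<in> {a..b}}"
proof -
  have "{x :: nat \<Rightarrow> real. \<forall>i<s. x i - y i \<in> {a..b}}
      = (\<Inter>i<s. {x. a \<le> x i - y i} \<inter> {x. x i - y i \<le> b})"
    by auto
  also have "closed \<dots>"
    by (intro closed_INT ballI closed_Int closed_Collect_le continuous_intros
        continuous_on_product_coordinates)
  finally show ?thesis .
qed

lemma Lam_le_1: "0 \<le> M \<Longrightarrow> Lam M \<sigma> t \<le> 1"
  by (simp add: Lam_def)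

lemma Lam_eq_near:
  "\<bar>t - \<sigma>\<bar> < 1 / M \<Longrightarrow> Lam M \<sigma> t = 1 - M * \<bar>t - \<sigma>\<bar>"
  by (simp add: Lam_def)

lemma Lam_pos_imp_near:
  assumes "0 < M" and "0 < Lam M \<sigma> t"
  shows "\<bar>t - \<sigma>\<bar> < 1 / M"
  using assms by (auto simp: Lam_def field_simps split: if_splits)

lemma theta_nonneg: "0 \<le> theta s M y x"
  by (simp add: theta_def relu_def)

lemma theta_le_1:
  assumes "0 \<le> M"
  shows "theta s M y x \<le> 1"
proof -
  have "(\<Sum>i<s. Lam M (y i) (x i)) \<le> real s"
    using sum_mono[of "{..<s}" "\<lambda>i. Lam M (y i) (x i)" "\<lambda>_. 1"] Lam_le_1[OF assms] by simp
  then show ?thesis by (simp add: theta_def relu_def Delta_def)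
qed

text \<open>All other summands of Delta are at most 1, so one nonpositive summand forces Delta \<le> 0.\<close>
lemma theta_neq_0_imp_Lam_pos:
  assumes "0 \<le> M" and "theta s M y x \<noteq> 0" and "i < s"
  shows "0 < Lam M (y i) (x i)"
proof (rule ccontr)
  assume "\<not> 0 < Lam M (y i) (x i)"
  have "(\<Sum>j<s. Lam M (y j) (x j)) = Lam M (y i) (x i) + (\<Sum>j\<in>{..<s} - {i}. Lam M (y j) (x j))"
    using \<open>i < s\<close> by (simp add: sum.remove)
  also have "\<dots> \<le> 0 + (\<Sum>j\<in>{..<s} - {i}. 1)"
    using \<open>\<not> 0 < Lam M (y i) (x i)\<close> Lam_le_1[OF assms(1)] by (intro add_mono sum_mono) auto
  also have "\<dots> = real s - 1"
    using \<open>i < s\<close> by (simp add: of_nat_diff)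
  finally have "theta s M y x = 0"
    by (simp add: theta_def relu_def Delta_def)
  with assms(2) show False ..
qed

lemma theta_neq_0_imp_near:
  assumes "0 < M" and "theta s M y x \<noteq> 0" and "i < s"
  shows "\<bar>x i - y i\<bar> < 1 / M"
  using assms by (intro Lam_pos_imp_near theta_neq_0_imp_Lam_pos) auto

lemma Delta_eq_near:
  assumes "\<forall>i<s. \<bar>x i - y i\<bar> < 1 / M"
  shows "Delta s M y x = 1 - M * (\<Sum>i<s. \<bar>x i - y i\<bar>)"
proof -
  have "(\<Sum>i<s. Lam M (y i) (x i)) = (\<Sum>i<s. 1 - M * \<bar>x i - y i\<bar>)"
    using assms by (intro sum.cong) (auto simp: Lam_eq_near)
  then show ?thesis
    by (simp add: Delta_def sum_subtractf sum_distrib_left)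
qed

lemma theta_ge_half:
  assumes "0 < M" and "1 \<le> s" and near: "\<forall>i<s. \<bar>x i - y i\<bar> \<le> 1 / (2 * real s * M)"
  shows "1 / 2 \<le> theta s M y x"
proof -
  have "1 / (2 * real s * M) < 1 / M"
    using assms(1,2) by (simp add: field_simps)
  with near have "Delta s M y x = 1 - M * (\<Sum>i<s. \<bar>x i - y i\<bar>)"
    by (intro Delta_eq_near) force
  also have "(\<Sum>i<s. \<bar>x i - y i\<bar>) \<le> real s * (1 / (2 * real s * M))"
    using sum_mono[of "{..<s}" _ "\<lambda>_. 1 / (2 * real s * M)"] near by simp
  then have "1 - M * (\<Sum>i<s. \<bar>x i - y i\<bar>) \<ge> 1 / 2"
    using assms(1,2) by (simp add: field_simps)
  finally show ?thesis
    by (simp add: theta_def relu_def)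
qed

lemma closure_theta_support:
  assumes "0 < M"
  shows "closure {x. theta s M y x \<noteq> 0} \<subseteq> {x. \<forall>i<s. x i - y i \<in> {-1/M..1/M}}"
proof (rule closure_minimal[OF _ closed_coordinate_box])
  show "{x. theta s M y x \<noteq> 0} \<subseteq> {x. \<forall>i<s. x i - y i \<in> {-1/M..1/M}}"
    using theta_neq_0_imp_near[OF assms] by (fastforce simp: abs_le_iff)
qed

lemma theta_borel_measurable:
  assumes "s \<le> d"
  shows "theta s M y \<in> borel_measurable (PiM {..<d} (\<lambda>_. lborel))"
proof -
  have [measurable]: "Lam M \<sigma> \<in> borel_measurable borel" for \<sigma>
    unfolding Lam_def by measurable
  have [measurable]: "relu \<in> borel_measurable borel"
    unfolding relu_def by measurable
  have "(\<lambda>x. Lam M (y i) (x i)) \<in> borel_measurable (PiM {..<d} (\<lambda>_. lborel))" if "i < s" for i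
  proof -
    have [measurable]: "i \<in> {..<d}"
      using that assms by simp
    show ?thesis by measurable
  qed
  then have [measurable]: "(\<lambda>x. \<Sum>i<s. Lam M (y i) (x i)) \<in> borel_measurable (PiM {..<d} (\<lambda>_. lborel))"
    by (intro borel_measurable_sum) simp
  show ?thesis
    unfolding theta_def Delta_def by measurable
qed

lemma unit_cube_sets:
  "unit_cube d \<inter> space (PiM {..<d} (\<lambda>_. lborel)) \<in> sets (PiM {..<d} (\<lambda>_. lborel))"
proof -
  have "unit_cube d \<inter> space (PiM {..<d} (\<lambda>_. lborel)) = PiE {..<d} (\<lambda>_. {0..1::real})"
    by (auto simp: unit_cube_def space_PiM PiE_def Pi_def)
  then show ?thesis by simp
qed

lemma space_cube_measure:
  "space (cube_measure d) = unit_cube d \<inter> space (PiM {..<d} (\<lambda>_. lborel))"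
  by (simp add: cube_measure_def space_restrict_space)

lemma emeasure_cube_measure:
  "A \<subseteq> unit_cube d \<Longrightarrow> emeasure (cube_measure d) A = emeasure (PiM {..<d} (\<lambda>_. lborel)) A"
  unfolding cube_measure_def by (rule emeasure_restrict_space[OF unit_cube_sets])

lemma theta_borel_measurable_cube:
  "s \<le> d \<Longrightarrow> theta s M y \<in> borel_measurable (cube_measure d)"
  unfolding cube_measure_def by (rule measurable_restrict_space1[OF theta_borel_measurable])

lemma emeasure_theta_support_le:
  assumes "0 < M" and "s \<le> d"
  shows "emeasure (cube_measure d) {x \<in> space (cube_measure d). theta s M y x \<noteq> 0}
       \<le> ennreal ((2 / M) ^ s)"
proof -
  define a where "a i = (if i < s then y i - 1 / M else 0)" for i
  define b where "b i = (if i < s then y i + 1 / M else 1)" for i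
  let ?P = "PiM {..<d} (\<lambda>_. lborel)"
  let ?B = "PiE {..<d} (\<lambda>i. {a i..b i})"
  have support_in_box: "{x \<in> space (cube_measure d). theta s M y x \<noteq> 0} \<subseteq> ?B"
  proof (rule subsetI, elim CollectE conjE)
    fix x assume x: "x \<in> space (cube_measure d)" and "theta s M y x \<noteq> 0"
    then have "x i \<in> {a i..b i}" if "i < d" for i
      using theta_neq_0_imp_near[OF assms(1)] that
      by (force simp: a_def b_def space_cube_measure unit_cube_def abs_le_iff)
    with x show "x \<in> ?B"
      by (auto simp: space_cube_measure space_PiM PiE_iff)
  qed
  have "emeasure (cube_measure d) {x \<in> space (cube_measure d). theta s M y x \<noteq> 0}
      = emeasure ?P {x \<in> space (cube_measure d). theta s M y x \<noteq> 0}"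
    by (rule emeasure_cube_measure) (auto simp: space_cube_measure)
  also have "\<dots> \<le> emeasure ?P ?B"
    using support_in_box by (rule emeasure_mono) simp
  also have "\<dots> = ennreal (\<Prod>i<d. b i - a i)"
    using assms(1) by (intro emeasure_PiM_lborel_box) (simp add: a_def b_def)
  also have "(\<Prod>i<d. b i - a i) = (\<Prod>i<d. if i < s then 2 / M else 1)"
    by (rule prod.cong) (auto simp: a_def b_def)
  also have "\<dots> = ennreal ((2 / M) ^ s)"
    using assms(2) by (simp add: prod_lessThan_if_less)
  finally show ?thesis .
qed

lemma emeasure_theta_ge_half_ge:
  assumes s: "1 \<le> s" "s \<le> d" and M: "1 \<le> M" and y: "\<forall>i<d. y i \<in> {0..1}"
  shows "ennreal ((1 / (2 * real s * M)) ^ s)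
       \<le> emeasure (cube_measure d) {x \<in> space (cube_measure d). 1 / 2 \<le> theta s M y x}"
proof -
  define r where "r = 1 / (2 * real s * M)"
  have "0 < r" and "r \<le> 1 / 2"
    using M s(1) mult_mono[of 1 "real s" 1 M] by (auto simp: r_def field_simps)
  text \<open>For i < s an interval of length r inside [0,1] and within distance r of y i.\<close>
  define a where "a i = (if i < s then (if y i \<le> 1 / 2 then y i else y i - r) else 0)" for i
  define b where "b i = a i + (if i < s then r else 1)" for i
  let ?P = "PiM {..<d} (\<lambda>_. lborel)"
  let ?C = "PiE {..<d} (\<lambda>i. {a i..b i})"
  have C_coord: "x i \<in> {a i..b i}" if "x \<in> ?C" and "i < d" for x i
    using that by (simp add: PiE_iff)
  have C_in_cube: "?C \<subseteq> unit_cube d"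
  proof
    fix x assume x: "x \<in> ?C"
    have "x i \<in> {0..1}" if "i < d" for i
      using y[rule_format, OF that] C_coord[OF x that] \<open>0 < r\<close> \<open>r \<le> 1 / 2\<close>
      by (auto simp: a_def b_def split: if_splits)
    then show "x \<in> unit_cube d"
      by (simp add: unit_cube_def)
  qed
  have "1 / 2 \<le> theta s M y x" if x: "x \<in> ?C" for x
  proof (rule theta_ge_half)
    have "\<bar>x i - y i\<bar> \<le> r" if "i < s" for i
      using C_coord[OF x, of i] that s(2) \<open>0 < r\<close>
      by (auto simp: a_def b_def abs_le_iff split: if_splits)
    then show "\<forall>i<s. \<bar>x i - y i\<bar> \<le> 1 / (2 * real s * M)"
      by (simp add: r_def)
  qed (use assms in auto)
  then have C_sub: "?C \<subseteq> {x \<in> space (cube_measure d). 1 / 2 \<le> theta s M y x}"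
    using C_in_cube by (auto simp: space_cube_measure space_PiM PiE_iff)
  have "ennreal (r ^ s) = ennreal (\<Prod>i<d. b i - a i)"
    using s(2) by (simp add: b_def prod_lessThan_if_less)
  also have "\<dots> = emeasure ?P ?C"
    using \<open>0 < r\<close> by (intro emeasure_PiM_lborel_box[symmetric]) (simp add: b_def)
  also have "\<dots> = emeasure (cube_measure d) ?C"
    using C_in_cube by (rule emeasure_cube_measure[symmetric])
  also have "\<dots> \<le> emeasure (cube_measure d) {x \<in> space (cube_measure d). 1 / 2 \<le> theta s M y x}"
    using C_sub by (rule emeasure_mono)
      (use theta_borel_measurable_cube[OF s(2)] in measurable)
  finally show ?thesis
    unfolding r_def .
qed

lemma theta_Lp_norm_bounds:
  assumes "1 \<le> s" and "s \<le> d" and "1 \<le> M" and "\<forall>i<d. y i \<in> {0..1}" and "0 < p"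
  shows "1 / 2 * ((1 / (2 * real s * M)) ^ s) powr s_over_p 1 p
        \<le> Lp_norm (cube_measure d) p (theta s M y)
      \<and> Lp_norm (cube_measure d) p (theta s M y) \<le> ((2 / M) ^ s) powr s_over_p 1 p"
proof -
  have "0 < M"
    using assms(3) by simp
  let ?S = "{x \<in> space (cube_measure d). 1 / 2 \<le> theta s M y x}"
  have S_sets: "?S \<in> sets (cube_measure d)"
    using theta_borel_measurable_cube[OF assms(2)] by measurable
  have S_large: "ennreal ((1 / (2 * real s * M)) ^ s) \<le> emeasure (cube_measure d) ?S"
    using assms(1-4) by (rule emeasure_theta_ge_half_ge)
  show ?thesis
    using assms(5) theta_borel_measurable_cube[OF assms(2)] _
      emeasure_theta_support_le[OF \<open>0 < M\<close> assms(2)] S_sets _ S_large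
    by (rule Lp_norm_bounds) (use assms(1) \<open>0 < M\<close> theta_nonneg theta_le_1 in auto)
qed

theorem lemma2p3:
  fixes d s :: nat and M :: real and y :: "nat \<Rightarrow> real" and p :: ereal
  assumes "1 \<le> s" and "s \<le> d"
    and "1 \<le> M"
    and "\<forall>i<d. y i \<in> {0..1}"
    and "0 < p"
  shows "closure {x. theta s M y x \<noteq> 0} \<subseteq> {x. \<forall>i<s. x i - y i \<in> {-1/M..1/M}}
     \<and> ereal (1/2 * (4 * real s) powr (- s_over_p s p) * M powr (- s_over_p s p))
         \<le> Lp_norm (cube_measure d) p (theta s M y)
     \<and> Lp_norm (cube_measure d) p (theta s M y)
         \<le> ereal (2 powr (s_over_p s p) * M powr (- s_over_p s p))"
proof -
  have "0 < M" and "0 \<le> s_over_p s p"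
    using assms(3,5) by (auto simp: s_over_p_def real_of_ereal_pos)
  note bounds = theta_Lp_norm_bounds[OF assms]
  have "((1 / (2 * real s * M)) ^ s) powr s_over_p 1 p = (1 / (2 * real s * M)) powr s_over_p s p"
    using assms(1) \<open>0 < M\<close> by (intro power_powr_s_over_p) simp
  also have "\<dots> = (2 * real s) powr (- s_over_p s p) * M powr (- s_over_p s p)"
    by (simp add: powr_minus_divide powr_divide powr_mult)
  also have "\<dots> \<ge> (4 * real s) powr (- s_over_p s p) * M powr (- s_over_p s p)"
    using assms(1) \<open>0 \<le> s_over_p s p\<close> by (intro mult_right_mono powr_mono2') auto
  finally have lower: "ereal (1/2 * (4 * real s) powr (- s_over_p s p) * M powr (- s_over_p s p))
      \<le> ereal (1 / 2 * ((1 / (2 * real s * M)) ^ s) powr s_over_p 1 p)"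
    by simp
  have "((2 / M) ^ s) powr s_over_p 1 p = (2 / M) powr s_over_p s p"
    using \<open>0 < M\<close> by (intro power_powr_s_over_p) simp
  also have "\<dots> = 2 powr s_over_p s p * M powr (- s_over_p s p)"
    using \<open>0 < M\<close> by (simp add: powr_divide powr_minus_divide)
  finally have upper: "((2 / M) ^ s) powr s_over_p 1 p = 2 powr s_over_p s p * M powr (- s_over_p s p)" .
  show ?thesis
    using closure_theta_support[OF \<open>0 < M\<close>] bounds[unfolded upper] lower by (blast intro: order_trans)
qed

end
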